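(* For all integers $b\ge2$ and $k\ge0$, $$\alpha_k(\mathbb{Z},b)=\sum_{i=1}^\infty\left\lfloor\frac{k}{b^i}\right\rfloor,$$ and for $k=0,1,2,\dots$, $$k!_{\mathbb{Z},\mathbb{N}}=\prod_{b=2}^k b^{\alpha_k(\mathbb{Z},b)}.$$
   Context: $\mathbb{N}=\{0,1,2,\dots\}$. For an integer $b\ge0$ and $a\in\mathbb{Z}$ define $\operatorname{ord}_b(a):=\sup\{k\in\mathbb{N}: a\mathbb{Z}\subseteq b^k\mathbb{Z}\}$ (convention $0^0=1$); thus for $b\ge2$ it is the largest $k$ with $b^k\mid a$ ($+\infty$ for $a=0$), $\operatorname{ord}_0(a)=+\infty$ if $a=0$ and $0$ otherwise, and $\operatorname{ord}_1(a)=+\infty$. For nonempty $S\subseteq\mathbb{Z}$, a $b$-ordering of $S$ is a sequence $(a_i)_{i\ge0}$ in $S$ such that for each $i\ge1$, $a_i$ attains $\min_{a'\in S}\sum_{j=0}^{i-1}\operatorname{ord}_b(a'-a_j)$; the $b$-exponent sequence is $\alpha_k(S,b):=\sum_{j=0}^{k-1}\operatorname{ord}_b(a_k-a_j)$ for any $b$-ordering (independent of the choice). For $\mathcal{T}\subseteq\mathbb{N}$ the generalized factorial is $k!_{S,\mathcal{T}}:=\prod_{b\in\mathcal{T}}b^{\alpha_k(S,b)}$, with conventions $b^{+\infty}=0$ for $b=0$ and $b\ge2$, $1^{+\infty}=1$, and $b^0=1$ for all $b\in\mathbb{N}$. *)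

theory Defs
  imports "HOL-Analysis.Analysis" "HOL-Library.Extended_Nat"
begin

text \<open>ord_b(a) = sup { k. a Z \<subseteq> b^k Z }; note a Z \<subseteq> b^k Z iff b^k divides a.\<close>
definition ordb :: "nat \<Rightarrow> int \<Rightarrow> enat" where
  "ordb b a = Sup (enat ` {k::nat. \<forall>x::int. \<exists>y::int. a * x = (int b) ^ k * y})"

definition b_ordering :: "int set \<Rightarrow> nat \<Rightarrow> (nat \<Rightarrow> int) \<Rightarrow> bool" where
  "b_ordering S b a \<longleftrightarrow> (\<forall>i. a i \<in> S) \<and>
     (\<forall>i\<ge>1. \<forall>a'\<in>S. (\<Sum>j<i. ordb b (a i - a j)) \<le> (\<Sum>j<i. ordb b (a' - a j)))"

definition alpha :: "int set \<Rightarrow> nat \<Rightarrow> nat \<Rightarrow> enat" where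
  "alpha S b k = (let a = (SOME a. b_ordering S b a) in (\<Sum>j<k. ordb b (a k - a j)))"

definition epow :: "nat \<Rightarrow> enat \<Rightarrow> nat" where
  "epow b e = (case e of enat n \<Rightarrow> b ^ n | \<infinity> \<Rightarrow> (if b = 1 then 1 else 0))"

text \<open>Generalized factorial: product over b in T of the (all but finitely many trivial) factors.\<close>
definition gfact :: "int set \<Rightarrow> nat set \<Rightarrow> nat \<Rightarrow> nat" where
  "gfact S T k = (\<Prod>b\<in>{b\<in>T. epow b (alpha S b k) \<noteq> 1}. epow b (alpha S b k))"

end

theory Submission
  imports Defs
begin

text \<open>
  Exchanging summations, \<open>\<Sum>j<k. ord\<^sub>b(x - a\<^sub>j)\<close> equals
  \<open>\<Sum>e\<ge>1. #{j < k. a\<^sub>j \<equiv> x (mod b\<^sup>e)}\<close>. If the terms \<open>a\<^sub>0, \<dots>, a\<^sub>k\<^sub>-\<^sub>1\<close>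
  are balanced modulo \<open>b\<^sup>e\<close>, i.e. the residue classes receive numbers of terms differing by at
  most one, then every class receives at least \<open>\<lfloor>k/b\<^sup>e\<rfloor>\<close> of them, so the sum is at
  least the Legendre sum \<open>\<Sum>e\<ge>1. \<lfloor>k/b\<^sup>e\<rfloor>\<close>; descending through the classes modulo
  \<open>b, b\<^sup>2, \<dots>\<close>, each time into a least populated subclass, yields an \<open>x\<close> attaining it.
  Hence a \<open>b\<close>-ordering of \<open>\<int>\<close> must choose \<open>a\<^sub>k\<close> in a least populated class modulo every
  \<open>b\<^sup>e\<close>, which keeps \<open>a\<^sub>0, \<dots>, a\<^sub>k\<close> balanced; by induction on \<open>k\<close>,
  \<open>\<alpha>\<^sub>k(\<int>, b)\<close> is the Legendre sum.
\<close>

lemma ordb_eq_Sup_dvd: "ordb b d = Sup (enat ` {k. int b ^ k dvd d})"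
proof -
  have "(\<forall>x. \<exists>y. d * x = int b ^ k * y) \<longleftrightarrow> int b ^ k dvd d" for k
    by (metis dvd_def dvd_mult2 mult.right_neutral)
  then show ?thesis
    unfolding ordb_def by simp
qed

lemma ordb_0_right: "ordb b 0 = \<infinity>"
proof -
  have "\<not> finite (range enat)"
    using finite_imageD[of enat UNIV] by (auto simp: inj_on_def)
  then show ?thesis
    unfolding ordb_eq_Sup_dvd by (simp add: Sup_enat_def)
qed

lemma ordb_0_left:
  assumes "d \<noteq> 0"
  shows "ordb 0 d = 0"
proof -
  have "{k. int 0 ^ k dvd d} = {0}"
    using assms by (auto simp: zero_power)
  then show ?thesis
    unfolding ordb_eq_Sup_dvd by (simp add: zero_enat_def)
qed

lemma ordb_eq_multiplicity:
  assumes "b \<ge> 2" and "d \<noteq> 0"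
  shows "ordb b d = enat (multiplicity (int b) d)"
proof -
  have "{k. int b ^ k dvd d} = {..multiplicity (int b) d}"
    using assms by (auto simp: power_dvd_iff_le_multiplicity)
  then show ?thesis
    unfolding ordb_eq_Sup_dvd by (auto intro!: antisym Sup_least Sup_upper)
qed

lemma sum_power_dvd_eq_min_multiplicity:
  assumes "b \<ge> 2" and "d \<noteq> 0"
  shows "(\<Sum>i<M. if int b ^ Suc i dvd d then 1 else 0) = min M (multiplicity (int b) d)"
proof -
  have "int b ^ Suc i dvd d \<longleftrightarrow> Suc i \<le> multiplicity (int b) d" for i
    using assms by (simp add: power_dvd_iff_le_multiplicity del: power_Suc)
  moreover have "(\<Sum>i<M. if Suc i \<le> m then 1 else 0) = min M m" for m :: nat
    by (induction M) auto
  ultimately show ?thesis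
    by (simp del: power_Suc)
qed

lemma ordb_ge_sum_power_dvd:
  assumes "b \<ge> 2"
  shows "enat (\<Sum>i<M. if int b ^ Suc i dvd d then 1 else 0) \<le> ordb b d"
  using assms by (cases "d = 0") (simp_all add: ordb_0_right ordb_eq_multiplicity
      sum_power_dvd_eq_min_multiplicity del: power_Suc)

lemma ordb_eq_sum_power_dvd:
  assumes "b \<ge> 2" and "\<not> int b ^ Suc M dvd d"
  shows "ordb b d = enat (\<Sum>i<M. if int b ^ Suc i dvd d then 1 else 0)"
proof -
  have "d \<noteq> 0"
    using assms(2) by auto
  moreover from this have "multiplicity (int b) d \<le> M"
    using assms by (simp add: power_dvd_iff_le_multiplicity del: power_Suc)
  ultimately show ?thesis
    using assms(1) by (simp add: ordb_eq_multiplicity sum_power_dvd_eq_min_multiplicity del: power_Suc)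
qed

definition class_count :: "nat \<Rightarrow> (nat \<Rightarrow> int) \<Rightarrow> nat \<Rightarrow> int \<Rightarrow> nat" where
  "class_count k a n x = (\<Sum>j<k. if int n dvd (x - a j) then 1 else 0)"

lemma class_count_0 [simp]: "class_count 0 a n x = 0"
  by (simp add: class_count_def)

lemma class_count_Suc:
  "class_count (Suc k) a n x = class_count k a n x + (if int n dvd (x - a k) then 1 else 0)"
  by (simp add: class_count_def)

lemma class_count_Suc_0 [simp]: "class_count k a (Suc 0) x = k"
  by (simp add: class_count_def)

lemma class_count_cong:
  assumes "int n dvd (x - y)"
  shows "class_count k a n x = class_count k a n y"
proof -
  have "int n dvd (x - a j) \<longleftrightarrow> int n dvd (y - a j)" for j
    using assms dvd_add_right_iff[of "int n" "x - y" "y - a j"] by simp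
  then show ?thesis
    unfolding class_count_def by simp
qed

lemma sum_lifts_dvd:
  assumes "n \<ge> 1" and "m \<ge> 1"
  shows "(\<Sum>t\<in>{0..<int m}. if int (n * m) dvd (x + t * int n - z) then 1 else 0)
         = (if int n dvd (x - z) then (1::nat) else 0)"
proof (cases "int n dvd (x - z)")
  case True
  then obtain c where c: "x - z = int n * c" by blast
  have "int (n * m) dvd (x + t * int n - z) \<longleftrightarrow> t = (- c) mod int m" if "t \<in> {0..<int m}" for t
  proof -
    have "x + t * int n - z = int n * (c + t)"
      using c by (simp add: algebra_simps)
    then have "int (n * m) dvd (x + t * int n - z) \<longleftrightarrow> int m dvd (c + t)"
      using assms by simp
    also have "\<dots> \<longleftrightarrow> t mod int m = (- c) mod int m"
      by (simp add: mod_eq_dvd_iff add.commute)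
    also have "t mod int m = t"
      using that by simp
    finally show ?thesis .
  qed
  then have "(\<Sum>t\<in>{0..<int m}. if int (n * m) dvd (x + t * int n - z) then 1 else 0)
        = (\<Sum>t\<in>{0..<int m}. if t = (- c) mod int m then 1 else (0::nat))"
    by (intro sum.cong) auto
  then show ?thesis
    using True assms by simp
next
  case False
  have "\<not> int (n * m) dvd (x + t * int n - z)" for t
  proof
    assume "int (n * m) dvd (x + t * int n - z)"
    then have "int n dvd (x - z + t * int n)"
      by (metis (no_types) diff_add_eq dvd_mult_left of_nat_mult)
    with False show False
      by (metis dvd_add_left_iff dvd_triv_right)
  qed
  then show ?thesis
    using False by simp
qed

lemma class_count_split:
  assumes "n \<ge> 1" and "m \<ge> 1"
  shows "class_count k a n x = (\<Sum>t\<in>{0..<int m}. class_count k a (n * m) (x + t * int n))"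
proof (induction k)
  case (Suc k)
  then show ?case
    by (simp only: class_count_Suc sum.distrib sum_lifts_dvd[OF assms])
qed simp

lemma ex_class_count_split_le:
  assumes "n \<ge> 1" and "m \<ge> 1"
  shows "\<exists>t\<in>{0..<int m}. class_count k a (n * m) (x + t * int n) \<le> class_count k a n x div m"
proof (rule ccontr)
  let ?c = "class_count k a n x"
  assume "\<not> ?thesis"
  then have "\<forall>t\<in>{0..<int m}. ?c div m < class_count k a (n * m) (x + t * int n)"
    by (simp add: not_le)
  then have "(\<Sum>t\<in>{0..<int m}. ?c div m + 1)
      \<le> (\<Sum>t\<in>{0..<int m}. class_count k a (n * m) (x + t * int n))"
    by (intro sum_mono) (simp add: Suc_le_eq)
  also have "\<dots> = ?c"
    by (rule class_count_split[OF assms, symmetric])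
  finally have "(\<Sum>t\<in>{0..<int m}. ?c div m + 1) \<le> ?c" .
  moreover have "?c < m + m * (?c div m)"
    using assms(2) by (simp add: dividend_less_times_div)
  ultimately show False
    by (simp add: algebra_simps)
qed

definition balanced :: "nat \<Rightarrow> (nat \<Rightarrow> int) \<Rightarrow> nat \<Rightarrow> bool" where
  "balanced k a n \<longleftrightarrow> (\<forall>x y. class_count k a n x \<le> class_count k a n y + 1)"

lemma balanced_class_count_ge:
  assumes "n \<ge> 1" and "balanced k a n"
  shows "k div n \<le> class_count k a n x"
proof (rule ccontr)
  assume "\<not> ?thesis"
  then have less: "class_count k a n (x mod int n) < k div n"
    using class_count_cong[of n x "x mod int n"] by (simp add: mod_eq_dvd_iff[symmetric])
  have "k = class_count k a (Suc 0) 0"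
    by simp
  also have "\<dots> = (\<Sum>t\<in>{0..<int n}. class_count k a n t)"
    using class_count_split[of 1 n k a 0] assms(1) by simp
  also have "\<dots> < (\<Sum>t\<in>{0..<int n}. k div n)"
  proof (rule sum_strict_mono_ex1)
    have "class_count k a n t \<le> class_count k a n (x mod int n) + 1" for t
      using assms(2) unfolding balanced_def by blast
    with less show "\<forall>t\<in>{0..<int n}. class_count k a n t \<le> k div n"
      by (metis Suc_eq_plus1 Suc_leI order_trans)
    have "x mod int n \<in> {0..<int n}"
      using assms(1) by simp
    with less show "\<exists>t\<in>{0..<int n}. class_count k a n t < k div n"
      by blast
  qed simp
  also have "\<dots> \<le> k"
    by simp
  finally show False
    by simp
qed

lemma balanced_Suc:
  assumes "balanced k a n" and "\<And>y. class_count k a n (a k) \<le> class_count k a n y"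
  shows "balanced (Suc k) a n"
  unfolding balanced_def
proof (intro allI)
  fix x y
  have "class_count k a n x \<le> class_count k a n y + 1"
    and "class_count k a n x \<le> class_count k a n (a k) + 1"
    using assms(1) unfolding balanced_def by blast+
  moreover have "class_count k a n (a k) \<le> class_count k a n y"
    by (rule assms(2))
  moreover have "class_count k a n x = class_count k a n (a k)" if "int n dvd (x - a k)"
    using that by (rule class_count_cong)
  moreover have "class_count k a n y = class_count k a n (a k)" if "int n dvd (y - a k)"
    using that by (rule class_count_cong)
  ultimately show "class_count (Suc k) a n x \<le> class_count (Suc k) a n y + 1"
    unfolding class_count_Suc by (cases "int n dvd (x - a k)"; cases "int n dvd (y - a k)") auto
qed

definition ordb_sum :: "nat \<Rightarrow> nat \<Rightarrow> (nat \<Rightarrow> int) \<Rightarrow> int \<Rightarrow> enat" where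
  "ordb_sum b k a x = (\<Sum>j<k. ordb b (x - a j))"

lemma enat_sum: "enat (sum f A) = (\<Sum>x\<in>A. enat (f x))"
  using of_nat_sum[of f A, where 'a=enat] by (simp add: of_nat_eq_enat)

lemma sum_class_count_swap:
  "enat (\<Sum>i<M. class_count k a (b ^ Suc i) x)
    = (\<Sum>j<k. enat (\<Sum>i<M. if int b ^ Suc i dvd (x - a j) then 1 else 0))"
proof -
  have "(\<Sum>i<M. class_count k a (b ^ Suc i) x)
      = (\<Sum>j<k. \<Sum>i<M. if int b ^ Suc i dvd (x - a j) then 1 else 0)"
    unfolding class_count_def of_nat_power by (rule sum.swap)
  then show ?thesis
    unfolding enat_sum[symmetric] by (rule arg_cong)
qed

lemma ordb_sum_ge_class_counts:
  assumes "b \<ge> 2"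
  shows "enat (\<Sum>i<M. class_count k a (b ^ Suc i) x) \<le> ordb_sum b k a x"
  unfolding sum_class_count_swap ordb_sum_def
  using assms by (intro sum_mono ordb_ge_sum_power_dvd)

lemma ordb_sum_eq_class_counts:
  assumes "b \<ge> 2" and "class_count k a (b ^ Suc M) x = 0"
  shows "ordb_sum b k a x = enat (\<Sum>i<M. class_count k a (b ^ Suc i) x)"
proof -
  have "\<not> int b ^ Suc M dvd (x - a j)" if "j < k" for j
    using assms(2) that unfolding class_count_def by (force simp: sum_eq_0_iff)
  then show ?thesis
    unfolding sum_class_count_swap ordb_sum_def
    using assms(1) by (intro sum.cong refl) (simp add: ordb_eq_sum_power_dvd del: power_Suc)
qed

text \<open>Truncating at \<open>k\<close> loses nothing, see \<open>div_power_Suc_eq_0\<close>.\<close>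
definition legendre_sum :: "nat \<Rightarrow> nat \<Rightarrow> nat" where
  "legendre_sum b k = (\<Sum>i<k. k div b ^ Suc i)"

lemma div_power_Suc_eq_0:
  assumes "b \<ge> 2" and "k \<le> i"
  shows "k div b ^ Suc i = 0"
proof -
  have "i < 2 ^ i"
    by (rule less_exp)
  also have "(2::nat) ^ i \<le> b ^ i"
    using assms(1) by (simp add: power_mono)
  also have "\<dots> \<le> b ^ Suc i"
    using assms(1) by simp
  finally show ?thesis
    using assms(2) by simp
qed

lemma legendre_sum_eq_sum:
  assumes "b \<ge> 2" and "k \<le> M"
  shows "(\<Sum>i<M. k div b ^ Suc i) = legendre_sum b k"
  unfolding legendre_sum_def
  by (rule sum.mono_neutral_right) (use assms div_power_Suc_eq_0 in auto)

lemma legendre_sum_eq_0: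
  assumes "k < b"
  shows "legendre_sum b k = 0"
proof -
  have "b \<le> b ^ Suc i" for i
    using assms by (intro self_le_power) auto
  then have "k < b ^ Suc i" for i
    using assms order_less_le_trans by blast
  then show ?thesis
    unfolding legendre_sum_def by simp
qed

lemma legendre_sum_sums:
  assumes "b \<ge> 2"
  shows "(\<lambda>i. real_of_int \<lfloor>real k / real b ^ Suc i\<rfloor>) sums real (legendre_sum b k)"
proof -
  have "real_of_int \<lfloor>real k / real b ^ Suc i\<rfloor> = real (k div b ^ Suc i)" for i
    by (simp only: of_nat_power[symmetric] floor_divide_of_nat_eq of_int_of_nat_eq)
  moreover have "(\<lambda>i. real (k div b ^ Suc i)) sums (\<Sum>i<k. real (k div b ^ Suc i))"
    using assms by (intro sums_finite) (auto simp: div_power_Suc_eq_0 simp del: power_Suc)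
  ultimately show ?thesis
    unfolding legendre_sum_def by simp
qed

context
  fixes b k :: nat and a :: "nat \<Rightarrow> int"
  assumes b: "b \<ge> 2"
    and class_count_ge: "\<And>e x. k div b ^ e \<le> class_count k a (b ^ e) x"
begin

lemma legendre_sum_le_ordb_sum: "enat (legendre_sum b k) \<le> ordb_sum b k a x"
proof -
  have "legendre_sum b k \<le> (\<Sum>i<k. class_count k a (b ^ Suc i) x)"
    unfolding legendre_sum_def by (intro sum_mono class_count_ge)
  then have "enat (legendre_sum b k) \<le> enat (\<Sum>i<k. class_count k a (b ^ Suc i) x)"
    by simp
  also have "\<dots> \<le> ordb_sum b k a x"
    by (rule ordb_sum_ge_class_counts[OF b])
  finally show ?thesis .
qed

lemma class_count_eq_if_ordb_sum_le:
  assumes "ordb_sum b k a x \<le> enat (legendre_sum b k)"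
  shows "class_count k a (b ^ e) x = k div b ^ e"
proof (cases e)
  case (Suc e')
  show ?thesis
  proof (rule ccontr)
    assume "class_count k a (b ^ e) x \<noteq> k div b ^ e"
    then have less: "k div b ^ Suc e' < class_count k a (b ^ Suc e') x"
      using class_count_ge[of e x] Suc by simp
    define M where "M = max k (Suc e')"
    have "legendre_sum b k = (\<Sum>i<M. k div b ^ Suc i)"
      using legendre_sum_eq_sum[OF b, of k M] by (simp add: M_def)
    also have "\<dots> < (\<Sum>i<M. class_count k a (b ^ Suc i) x)"
    proof (rule sum_strict_mono_ex1)
      show "\<forall>i\<in>{..<M}. k div b ^ Suc i \<le> class_count k a (b ^ Suc i) x"
        using class_count_ge by blast
      show "\<exists>i\<in>{..<M}. k div b ^ Suc i < class_count k a (b ^ Suc i) x"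
        using less by (intro bexI[of _ e']) (simp_all add: M_def)
    qed simp
    finally have "enat (legendre_sum b k) < enat (\<Sum>i<M. class_count k a (b ^ Suc i) x)"
      by simp
    also have "\<dots> \<le> ordb_sum b k a x"
      by (rule ordb_sum_ge_class_counts[OF b])
    finally have "enat (legendre_sum b k) < ordb_sum b k a x" .
    with assms show False
      by simp
  qed
qed simp

lemma ex_class_counts_eq_div: "\<exists>x. \<forall>e'\<le>e. class_count k a (b ^ e') x = k div b ^ e'"
proof (induction e)
  case 0
  show ?case
    by simp
next
  case (Suc e)
  then obtain x where x: "\<forall>e'\<le>e. class_count k a (b ^ e') x = k div b ^ e'"
    by blast
  have "b ^ e \<ge> 1"
    using b by simp
  then obtain t where t: "class_count k a (b ^ e * b) (x + t * int (b ^ e)) \<le> k div b ^ e div b"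
    using ex_class_count_split_le[of "b ^ e" b k a x] x b by auto
  define x' where "x' = x + t * int (b ^ e)"
  have "class_count k a (b ^ Suc e) x' \<le> k div b ^ Suc e"
    using t by (simp only: x'_def power_Suc2 div_mult2_eq)
  then have "class_count k a (b ^ Suc e) x' = k div b ^ Suc e"
    using class_count_ge by (rule antisym)
  moreover have "class_count k a (b ^ e') x' = k div b ^ e'" if "e' \<le> e" for e'
  proof -
    have "class_count k a (b ^ e') x' = class_count k a (b ^ e') x"
      using that unfolding x'_def by (intro class_count_cong) (simp add: le_imp_power_dvd)
    with x that show ?thesis
      by simp
  qed
  ultimately show ?case
    using le_Suc_eq by blast
qed

lemma ex_ordb_sum_eq_legendre_sum: "\<exists>x. ordb_sum b k a x = enat (legendre_sum b k)"
proof -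
  obtain x where x: "\<forall>e\<le>Suc k. class_count k a (b ^ e) x = k div b ^ e"
    using ex_class_counts_eq_div by blast
  then have "class_count k a (b ^ Suc k) x = 0"
    using div_power_Suc_eq_0[OF b, of k k] by (simp del: power_Suc)
  then have "ordb_sum b k a x = enat (\<Sum>i<k. class_count k a (b ^ Suc i) x)"
    by (rule ordb_sum_eq_class_counts[OF b])
  also have "\<dots> = enat (legendre_sum b k)"
    unfolding legendre_sum_def using x by (simp del: power_Suc)
  finally show ?thesis ..
qed

end

lemma ex_least_value:
  fixes f :: "'a \<Rightarrow> 'b::wellorder"
  assumes "S \<noteq> {}"
  shows "\<exists>x\<in>S. \<forall>x'\<in>S. f x \<le> f x'"
proof -
  obtain x0 where "x0 \<in> S"
    using assms by blast
  define v where "v = (LEAST v. \<exists>x\<in>S. f x = v)"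
  have "\<exists>x\<in>S. f x = v"
    unfolding v_def by (rule LeastI) (use \<open>x0 \<in> S\<close> in blast)
  moreover have "v \<le> f x'" if "x' \<in> S" for x'
    unfolding v_def by (rule Least_le) (use that in blast)
  ultimately show ?thesis
    by blast
qed

text \<open>
  For \<open>j \<le> n\<close>, \<open>greedy_prefix S b n j\<close> is the \<open>j\<close>-th term of a greedily chosen
  \<open>b\<close>-ordering of \<open>S\<close>; the values at \<open>j > n\<close> are irrelevant.
\<close>
fun greedy_prefix :: "int set \<Rightarrow> nat \<Rightarrow> nat \<Rightarrow> nat \<Rightarrow> int" where
  "greedy_prefix S b 0 = (\<lambda>_. SOME x. x \<in> S)"
| "greedy_prefix S b (Suc n) = (let p = greedy_prefix S b n in
     p(Suc n := SOME x. x \<in> S \<and> (\<forall>x'\<in>S. ordb_sum b (Suc n) p x \<le> ordb_sum b (Suc n) p x')))"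

lemma greedy_prefix_stable:
  assumes "j \<le> n" and "n \<le> m"
  shows "greedy_prefix S b m j = greedy_prefix S b n j"
  using assms(2) by (induction m rule: dec_induct) (use assms(1) in \<open>auto simp: Let_def\<close>)

lemma b_ordering_greedy:
  assumes "S \<noteq> {}"
  shows "b_ordering S b (\<lambda>i. greedy_prefix S b i i)"
proof -
  let ?a = "\<lambda>i. greedy_prefix S b i i"
  have ordb_sum_prefix: "ordb_sum b (Suc n) (greedy_prefix S b n) x = ordb_sum b (Suc n) ?a x"
    for n x
    unfolding ordb_sum_def
  proof (rule sum.cong)
    fix j
    assume "j \<in> {..<Suc n}"
    then show "ordb b (x - greedy_prefix S b n j) = ordb b (x - ?a j)"
      using greedy_prefix_stable[of j j n S b] by simp
  qed simp
  have "?a i \<in> S \<and> (i \<ge> 1 \<longrightarrow> (\<forall>x'\<in>S. ordb_sum b i ?a (?a i) \<le> ordb_sum b i ?a x'))" for i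
  proof (cases i)
    case 0
    then show ?thesis
      using assms by (simp add: some_in_eq)
  next
    case (Suc n)
    let ?P = "\<lambda>x. x \<in> S \<and> (\<forall>x'\<in>S. ordb_sum b (Suc n) ?a x \<le> ordb_sum b (Suc n) ?a x')"
    have greedy_Suc: "?a (Suc n) = (SOME x. ?P x)"
      by (simp add: Let_def ordb_sum_prefix)
    have "\<exists>x. ?P x"
      using ex_least_value[OF assms, of "ordb_sum b (Suc n) ?a"] by blast
    then have "?P (?a (Suc n))"
      unfolding greedy_Suc by (rule someI_ex)
    then show ?thesis
      using Suc by (simp del: greedy_prefix.simps)
  qed
  then show ?thesis
    unfolding b_ordering_def ordb_sum_def by blast
qed

lemma b_ordering_ordb_sum_le:
  assumes "b_ordering S b a" and "x \<in> S"
  shows "ordb_sum b i a (a i) \<le> ordb_sum b i a x"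
proof (cases "i = 0")
  case False
  then have "i \<ge> 1"
    by simp
  with assms show ?thesis
    unfolding b_ordering_def ordb_sum_def by blast
qed (simp add: ordb_sum_def)

lemma alpha_eq_ordb_sum:
  assumes "S \<noteq> {}"
  shows "\<exists>a. b_ordering S b a \<and> alpha S b k = ordb_sum b k a (a k)"
proof -
  have "\<exists>a. b_ordering S b a"
    using b_ordering_greedy[OF assms] by blast
  then have "b_ordering S b (SOME a. b_ordering S b a)"
    by (rule someI_ex)
  then show ?thesis
    unfolding alpha_def ordb_sum_def Let_def by blast
qed

lemma b_ordering_ordb_sum_eq_legendre_sum:
  assumes b: "b \<ge> 2" and a: "b_ordering UNIV b a"
    and class_count_ge: "\<And>e x. k div b ^ e \<le> class_count k a (b ^ e) x"
  shows "ordb_sum b k a (a k) = enat (legendre_sum b k)"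
proof -
  obtain x where "ordb_sum b k a x = enat (legendre_sum b k)"
    using ex_ordb_sum_eq_legendre_sum[OF b class_count_ge] by blast
  then have "ordb_sum b k a (a k) \<le> enat (legendre_sum b k)"
    using b_ordering_ordb_sum_le[OF a UNIV_I, of k x] by simp
  then show ?thesis
    using legendre_sum_le_ordb_sum[OF b class_count_ge] by (simp add: antisym)
qed

lemma b_ordering_balanced:
  assumes b: "b \<ge> 2" and a: "b_ordering UNIV b a"
  shows "balanced k a (b ^ e)"
proof (induction k arbitrary: e)
  case 0
  show ?case
    by (simp add: balanced_def)
next
  case (Suc k)
  have class_count_ge: "k div b ^ e' \<le> class_count k a (b ^ e') x" for e' x
    using Suc b by (simp add: balanced_class_count_ge)
  have "ordb_sum b k a (a k) = enat (legendre_sum b k)"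
    using b a class_count_ge by (rule b_ordering_ordb_sum_eq_legendre_sum)
  then have "class_count k a (b ^ e) (a k) = k div b ^ e"
    using b class_count_ge by (intro class_count_eq_if_ordb_sum_le) simp_all
  then show ?case
    using Suc class_count_ge by (simp add: balanced_Suc)
qed

lemma alpha_UNIV_eq_legendre_sum:
  assumes b: "b \<ge> 2"
  shows "alpha UNIV b k = enat (legendre_sum b k)"
proof -
  obtain a where a: "b_ordering UNIV b a" and "alpha UNIV b k = ordb_sum b k a (a k)"
    using alpha_eq_ordb_sum[of UNIV b k] by blast
  moreover have "k div b ^ e \<le> class_count k a (b ^ e) x" for e x
    using b by (simp add: balanced_class_count_ge b_ordering_balanced[OF b a])
  ultimately show ?thesis
    using b_ordering_ordb_sum_eq_legendre_sum[OF b a] by simp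
qed

lemma alpha_0_base:
  assumes "infinite S"
  shows "alpha S 0 k = 0"
proof -
  obtain a where a: "b_ordering S 0 a" and alpha: "alpha S 0 k = ordb_sum 0 k a (a k)"
    using alpha_eq_ordb_sum[OF infinite_imp_nonempty[OF assms]] by blast
  have "infinite (S - a ` {..<k})"
    using assms by (intro Diff_infinite_finite) auto
  then obtain x where x: "x \<in> S - a ` {..<k}"
    using infinite_imp_nonempty by blast
  then have "ordb_sum 0 k a x = 0"
    unfolding ordb_sum_def by (intro sum.neutral) (auto intro!: ordb_0_left)
  then show ?thesis
    using alpha b_ordering_ordb_sum_le[OF a, of x k] x by simp
qed

lemma gfact_UNIV_UNIV: "gfact UNIV UNIV k = (\<Prod>b\<in>{2..k}. epow b (alpha UNIV b k))"
proof -
  have epow_eq_1: "epow b (alpha UNIV b k) = 1" if b: "b \<notin> {2..k}" for b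
  proof -
    consider "b = 0" | "b = 1" | "b \<ge> 2" "k < b"
      using b by atomize_elim auto
    then show ?thesis
      by cases (simp_all add: alpha_0_base epow_def zero_enat_def alpha_UNIV_eq_legendre_sum
          legendre_sum_eq_0 split: enat.split)
  qed
  have "(\<Prod>b\<in>{2..k}. epow b (alpha UNIV b k))
      = (\<Prod>b\<in>{b\<in>UNIV. epow b (alpha UNIV b k) \<noteq> 1}. epow b (alpha UNIV b k))"
  proof (rule prod.mono_neutral_right)
    show "{b \<in> UNIV. epow b (alpha UNIV b k) \<noteq> 1} \<subseteq> {2..k}"
      using epow_eq_1 by blast
  qed auto
  then show ?thesis
    unfolding gfact_def by simp
qed

theorem theorem7p2:
  shows "(\<forall>b k::nat. b \<ge> 2 \<longrightarrow>
            (\<exists>n::nat. alpha (UNIV::int set) b k = enat n \<and>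
               (\<lambda>i. real_of_int \<lfloor>real k / real b ^ (Suc i)\<rfloor>) sums (real n)))
       \<and> (\<forall>k::nat. gfact (UNIV::int set) (UNIV::nat set) k
                   = (\<Prod>b\<in>{2..k}. epow b (alpha (UNIV::int set) b k)))"
proof (intro conjI allI impI)
  fix b k :: nat
  assume "b \<ge> 2"
  then show "\<exists>n. alpha UNIV b k = enat n \<and>
      (\<lambda>i. real_of_int \<lfloor>real k / real b ^ Suc i\<rfloor>) sums real n"
    using alpha_UNIV_eq_legendre_sum legendre_sum_sums by blast
qed (rule gfact_UNIV_UNIV)

end
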